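(* Let $X$ come from the $J$-state HMM of the context, let $L_0\in\mathbb N$, $L\ge0$, and let $h_1,\dots,h_{L_0}$ be functions for which the expectations below are finite. Define $M^x=(E_H[h_l(X_1)K_L(x,X_2)h_m(X_3)])_{l,m\le L_0}$, $P=(E_H[h_l(X_1)h_m(X_3)])_{l,m\le L_0}$, $D^x=\mathrm{diag}(K_L[f_j](x))_{j\le J}$, $O=(E_H[h_l(X_1)\mid\theta_1=j])_{l\le L_0,j\le J}$. Then $$M^x=O\,\mathrm{diag}(\pi)\,Q\,D^x\,Q\,O^\intercal,\qquad P=O\,\mathrm{diag}(\pi)\,Q^2\,O^\intercal.$$ Moreover, if $V\in\mathbb R^{L_0\times J}$ is such that $V^\intercal PV$ is invertible, then $B^x:=(V^\intercal PV)^{-1}V^\intercal M^xV$ satisfies $$B^x=(QO^\intercal V)^{-1}D^x(QO^\intercal V),$$ so the matrices $(B^x:x\in\mathbb R)$ are simultaneously diagonalisable, $B^x$ having eigenvalues $(K_L[f_j](x))_{j\le J}$.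
   Context: $J$-state HMM: $\theta=(\theta_n)$ is a Markov chain on $\{1,\dots,J\}$ with transition matrix $Q$ and $\theta_1\sim\pi$; given $\theta$, the $X_n$ are independent with Lebesgue densities $f_{\theta_n}$; $E_H$ is expectation under this model. $K$ is a bounded Lipschitz function supported in $[-1,1]$, $K_L(x,y)=2^LK(2^L(x-y))$ and $K_L[f](x)=\int K_L(x,y)f(y)\,dy$. *)

theory Defs
  imports "HOL-Analysis.Analysis"
begin

text \<open>Hidden states {1..J} are modelled by a finite type 'j; the index set {1..L0}
 of the test functions by a finite type 'l. Matrices are HOL-Analysis
 Cartesian matrices: real^'c^'r has rows indexed by 'r and columns by 'c.\<close>

definition diag_mat :: "real^'n \<Rightarrow> real^'n^'n" where
  "diag_mat v = (\<chi> i j. if i = j then v $ i else 0)"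

definition KL :: "(real \<Rightarrow> real) \<Rightarrow> nat \<Rightarrow> real \<Rightarrow> real \<Rightarrow> real" where
  "KL K L x y = 2 ^ L * K (2 ^ L * (x - y))"

definition KL_apply :: "(real \<Rightarrow> real) \<Rightarrow> nat \<Rightarrow> (real \<Rightarrow> real) \<Rightarrow> real \<Rightarrow> real" where
  "KL_apply K L f x = (LINT y|lborel. KL K L x y * f y)"

text \<open>HMM parameters: initial law p0 (p0 $ j = P(theta_1 = j)), transition matrix Q
 (Q $ i $ j = P(theta_(n+1) = j | theta_n = i)), emission densities f j.\<close>
definition hmm_params :: "real^'j \<Rightarrow> real^'j^'j \<Rightarrow> ('j::finite \<Rightarrow> real \<Rightarrow> real) \<Rightarrow> bool" where
  "hmm_params p0 Q f \<longleftrightarrow>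
     (\<forall>j. 0 \<le> p0 $ j) \<and> (\<Sum>j\<in>UNIV. p0 $ j) = 1 \<and>
     (\<forall>i j. 0 \<le> Q $ i $ j) \<and> (\<forall>i. (\<Sum>j\<in>UNIV. Q $ i $ j) = 1) \<and>
     (\<forall>j. f j \<in> borel_measurable borel \<and> (\<forall>x. 0 \<le> f j x) \<and>
          integrable lborel (f j) \<and> integral\<^sup>L lborel (f j) = 1)"

text \<open>Joint Lebesgue density of (X_1, X_2, X_3) under the HMM: summing over the
 hidden path (theta_1, theta_2, theta_3), which has probability p0 Q Q, and using
 conditional independence of the X_n given theta with densities f_(theta_n).\<close>
definition hmm_density3 :: "real^'j \<Rightarrow> real^'j^'j \<Rightarrow> ('j::finite \<Rightarrow> real \<Rightarrow> real)
    \<Rightarrow> real \<times> real \<times> real \<Rightarrow> real" where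
  "hmm_density3 p0 Q f = (\<lambda>(x1, x2, x3).
     (\<Sum>j1\<in>UNIV. \<Sum>j2\<in>UNIV. \<Sum>j3\<in>UNIV.
        p0 $ j1 * Q $ j1 $ j2 * Q $ j2 $ j3 * f j1 x1 * f j2 x2 * f j3 x3))"

abbreviation lborel3 :: "(real \<times> real \<times> real) measure" where
  "lborel3 \<equiv> lborel \<Otimes>\<^sub>M (lborel \<Otimes>\<^sub>M lborel)"

definition EH_integrable :: "real^'j \<Rightarrow> real^'j^'j \<Rightarrow> ('j::finite \<Rightarrow> real \<Rightarrow> real)
    \<Rightarrow> (real \<times> real \<times> real \<Rightarrow> real) \<Rightarrow> bool" where
  "EH_integrable p0 Q f g \<longleftrightarrow> integrable lborel3 (\<lambda>z. g z * hmm_density3 p0 Q f z)"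

definition EH :: "real^'j \<Rightarrow> real^'j^'j \<Rightarrow> ('j::finite \<Rightarrow> real \<Rightarrow> real)
    \<Rightarrow> (real \<times> real \<times> real \<Rightarrow> real) \<Rightarrow> real" where
  "EH p0 Q f g = (LINT z|lborel3. g z * hmm_density3 p0 Q f z)"

text \<open>E_H[h(X_1) | theta_1 = j] = integral of h against f j.\<close>
definition EH_cond1 :: "('j \<Rightarrow> real \<Rightarrow> real) \<Rightarrow> (real \<Rightarrow> real) \<Rightarrow> 'j \<Rightarrow> real" where
  "EH_cond1 f h j = (LINT x|lborel. h x * f j x)"

definition Mx :: "real^'j \<Rightarrow> real^'j^'j \<Rightarrow> ('j::finite \<Rightarrow> real \<Rightarrow> real)
    \<Rightarrow> (real \<Rightarrow> real) \<Rightarrow> nat \<Rightarrow> ('l::finite \<Rightarrow> real \<Rightarrow> real) \<Rightarrow> real \<Rightarrow> real^'l^'l" where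
  "Mx p0 Q f K L h x = (\<chi> l m. EH p0 Q f (\<lambda>(x1, x2, x3). h l x1 * KL K L x x2 * h m x3))"

definition Pmat :: "real^'j \<Rightarrow> real^'j^'j \<Rightarrow> ('j::finite \<Rightarrow> real \<Rightarrow> real)
    \<Rightarrow> ('l::finite \<Rightarrow> real \<Rightarrow> real) \<Rightarrow> real^'l^'l" where
  "Pmat p0 Q f h = (\<chi> l m. EH p0 Q f (\<lambda>(x1, x2, x3). h l x1 * h m x3))"

definition Dx :: "('j::finite \<Rightarrow> real \<Rightarrow> real) \<Rightarrow> (real \<Rightarrow> real) \<Rightarrow> nat \<Rightarrow> real \<Rightarrow> real^'j^'j" where
  "Dx f K L x = diag_mat (\<chi> j. KL_apply K L (f j) x)"

definition Omat :: "('j::finite \<Rightarrow> real \<Rightarrow> real) \<Rightarrow> ('l::finite \<Rightarrow> real \<Rightarrow> real) \<Rightarrow> real^'j^'l" where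
  "Omat f h = (\<chi> l j. EH_cond1 f (h l) j)"

end

theory Submission
  imports Defs
begin

text \<open>Conditionally on the hidden path the observations are independent, so the joint
 density of (X_1, X_2, X_3) is a mixture of product densities. Hence the expectation of a
 product g_1(X_1) g_2(X_2) g_3(X_3) is, by Fubini, a sum over hidden paths of products of
 one-dimensional conditional expectations, which is exactly an entry of the matrix product
 O diag(pi) Q diag(E[g_2(X_1) | theta_1 = j]) Q O^T. Taking g_2 = K_L(x, .) gives M^x and
 g_2 = 1 gives P. Writing V^T P V = A C and V^T M^x V = A D^x C with A = V^T O diag(pi) Q
 and C = Q O^T V, invertibility of the square matrix A C forces C to be invertible and
 (A C)^-1 A = C^-1, which is the diagonalisation of B^x.\<close>

lemma (in pair_sigma_finite) integrable_product:
  fixes f :: "'a \<Rightarrow> 'c::{real_normed_field, second_countable_topology, banach}"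
    and g :: "'b \<Rightarrow> 'c"
  assumes f: "integrable M1 f" and g: "integrable M2 g"
  shows "integrable (M1 \<Otimes>\<^sub>M M2) (\<lambda>(x, y). f x * g y)"
proof (rule Fubini_integrable)
  have [measurable]: "f \<in> borel_measurable M1" "g \<in> borel_measurable M2"
    using f g by auto
  show "(\<lambda>(x, y). f x * g y) \<in> borel_measurable (M1 \<Otimes>\<^sub>M M2)"
    by measurable
  show "integrable M1 (\<lambda>x. \<integral>y. norm (case (x, y) of (x, y) \<Rightarrow> f x * g y) \<partial>M2)"
    using f by (simp add: norm_mult)
  show "AE x in M1. integrable M2 (\<lambda>y. case (x, y) of (x, y) \<Rightarrow> f x * g y)"
    using g by simp
qed

lemma (in pair_sigma_finite) integral_product:
  fixes f :: "'a \<Rightarrow> 'c::{real_normed_field, second_countable_topology, banach}"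
    and g :: "'b \<Rightarrow> 'c"
  assumes f: "integrable M1 f" and g: "integrable M2 g"
  shows "(\<integral>(x, y). f x * g y \<partial>(M1 \<Otimes>\<^sub>M M2)) = integral\<^sup>L M1 f * integral\<^sup>L M2 g"
proof -
  have "(\<integral>(x, y). f x * g y \<partial>(M1 \<Otimes>\<^sub>M M2)) = (\<integral>x. (\<integral>y. f x * g y \<partial>M2) \<partial>M1)"
    using integral_fst[of "\<lambda>x y. f x * g y"] integrable_product[OF f g] by simp
  then show ?thesis
    by simp
qed

lemma
  fixes f :: "'a \<Rightarrow> 'd::{real_normed_field, second_countable_topology, banach}"
    and g :: "'b \<Rightarrow> 'd" and h :: "'c \<Rightarrow> 'd"
  assumes M1: "sigma_finite_measure M1" and M2: "sigma_finite_measure M2"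
    and M3: "sigma_finite_measure M3"
    and f: "integrable M1 f" and g: "integrable M2 g" and h: "integrable M3 h"
  shows integrable_product3: "integrable (M1 \<Otimes>\<^sub>M (M2 \<Otimes>\<^sub>M M3)) (\<lambda>(x, y, z). f x * (g y * h z))"
    and integral_product3: "(\<integral>(x, y, z). f x * (g y * h z) \<partial>(M1 \<Otimes>\<^sub>M (M2 \<Otimes>\<^sub>M M3)))
      = integral\<^sup>L M1 f * integral\<^sup>L M2 g * integral\<^sup>L M3 h"
proof -
  interpret M23: pair_sigma_finite M2 M3
    using M2 M3 by (simp add: pair_sigma_finite_def)
  interpret M123: pair_sigma_finite M1 "M2 \<Otimes>\<^sub>M M3"
    using M1 M23.sigma_finite_measure_axioms by (simp add: pair_sigma_finite_def)
  have split: "(\<lambda>(x, y, z). f x * (g y * h z)) = (\<lambda>(x, w). f x * (\<lambda>(y, z). g y * h z) w)"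
    by auto
  show "integrable (M1 \<Otimes>\<^sub>M (M2 \<Otimes>\<^sub>M M3)) (\<lambda>(x, y, z). f x * (g y * h z))"
    unfolding split by (intro M123.integrable_product f M23.integrable_product g h)
  show "(\<integral>(x, y, z). f x * (g y * h z) \<partial>(M1 \<Otimes>\<^sub>M (M2 \<Otimes>\<^sub>M M3)))
      = integral\<^sup>L M1 f * integral\<^sup>L M2 g * integral\<^sup>L M3 h"
    unfolding split
    by (simp add: M123.integral_product f M23.integrable_product M23.integral_product g h mult.assoc)
qed

lemma integrable_bounded_mult:
  fixes g f :: "'a \<Rightarrow> real"
  assumes g: "g \<in> borel_measurable M" and bound: "\<And>x. \<bar>g x\<bar> \<le> B" and f: "integrable M f"
  shows "integrable M (\<lambda>x. g x * f x)"
proof (rule Bochner_Integration.integrable_bound)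
  show "integrable M (\<lambda>x. B * f x)"
    using f by simp
  show "(\<lambda>x. g x * f x) \<in> borel_measurable M"
    using g f by measurable
  have "\<bar>g x\<bar> * \<bar>f x\<bar> \<le> \<bar>B\<bar> * \<bar>f x\<bar>" for x
    using bound[of x] by (intro mult_right_mono) auto
  then show "AE x in M. norm (g x * f x) \<le> norm (B * f x)"
    by (simp add: abs_mult)
qed

lemma EH_product:
  fixes f :: "'j::finite \<Rightarrow> real \<Rightarrow> real" and u v w :: "real \<Rightarrow> real"
  assumes "\<And>j. integrable lborel (\<lambda>x. u x * f j x)"
    and "\<And>j. integrable lborel (\<lambda>x. v x * f j x)"
    and "\<And>j. integrable lborel (\<lambda>x. w x * f j x)"
  shows "EH p0 Q f (\<lambda>(x1, x2, x3). u x1 * v x2 * w x3) =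
    (\<Sum>j1\<in>UNIV. \<Sum>j2\<in>UNIV. \<Sum>j3\<in>UNIV. p0 $ j1 * Q $ j1 $ j2 * Q $ j2 $ j3 *
       (EH_cond1 f u j1 * EH_cond1 f v j2 * EH_cond1 f w j3))"
proof -
  define T where "T j1 j2 j3 = (\<lambda>(x, y, z). (u x * f j1 x) * ((v y * f j2 y) * (w z * f j3 z)))"
    for j1 j2 j3
  have lborel: "sigma_finite_measure (lborel :: real measure)"
    by (rule lborel.sigma_finite_measure_axioms)
  have T_integrable: "integrable lborel3 (T j1 j2 j3)" for j1 j2 j3
    unfolding T_def by (rule integrable_product3[OF lborel lborel lborel assms])
  have T_integral: "integral\<^sup>L lborel3 (T j1 j2 j3)
      = EH_cond1 f u j1 * EH_cond1 f v j2 * EH_cond1 f w j3" for j1 j2 j3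
    unfolding T_def EH_cond1_def by (rule integral_product3[OF lborel lborel lborel assms])
  have "(\<lambda>z. (case z of (x1, x2, x3) \<Rightarrow> u x1 * v x2 * w x3) * hmm_density3 p0 Q f z)
     = (\<lambda>z. \<Sum>j1\<in>UNIV. \<Sum>j2\<in>UNIV. \<Sum>j3\<in>UNIV. p0 $ j1 * Q $ j1 $ j2 * Q $ j2 $ j3 * T j1 j2 j3 z)"
    (is "?lhs = ?rhs")
  proof
    fix z :: "real \<times> real \<times> real"
    show "?lhs z = ?rhs z"
      by (cases z rule: prod_cases3)
        (simp add: T_def hmm_density3_def sum_distrib_left sum_distrib_right algebra_simps)
  qed
  then show ?thesis
    by (simp add: EH_def integral_sum integrable_sum T_integrable T_integral)
qed

lemma diag_mat_one: "diag_mat (\<chi> j. 1) = mat 1"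
  by (simp add: diag_mat_def mat_def vec_eq_iff)

lemma sum_reverse3:
  "(\<Sum>k\<in>C. \<Sum>j\<in>B. \<Sum>i\<in>A. F i j k) = (\<Sum>i\<in>A. \<Sum>j\<in>B. \<Sum>k\<in>C. F i j k)"
proof -
  have "(\<Sum>k\<in>C. \<Sum>j\<in>B. \<Sum>i\<in>A. F i j k) = (\<Sum>k\<in>C. \<Sum>i\<in>A. \<Sum>j\<in>B. F i j k)"
    by (rule sum.cong[OF refl], rule sum.swap)
  also have "\<dots> = (\<Sum>i\<in>A. \<Sum>k\<in>C. \<Sum>j\<in>B. F i j k)"
    by (rule sum.swap)
  also have "\<dots> = (\<Sum>i\<in>A. \<Sum>j\<in>B. \<Sum>k\<in>C. F i j k)"
    by (rule sum.cong[OF refl], rule sum.swap)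
  finally show ?thesis .
qed

lemma matrix_mul_diag_mat_nth:
  fixes A B :: "real^'n^'l" and Q :: "real^'n^'n" and p d :: "real^'n"
  shows "(A ** diag_mat p ** Q ** diag_mat d ** Q ** transpose B) $ l $ m =
    (\<Sum>j1\<in>UNIV. \<Sum>j2\<in>UNIV. \<Sum>j3\<in>UNIV. p $ j1 * Q $ j1 $ j2 * Q $ j2 $ j3 *
       (A $ l $ j1 * d $ j2 * B $ m $ j3))"
proof -
  have "(A ** diag_mat p ** Q ** diag_mat d ** Q ** transpose B) $ l $ m =
    (\<Sum>j3\<in>UNIV. \<Sum>j2\<in>UNIV. \<Sum>j1\<in>UNIV. p $ j1 * Q $ j1 $ j2 * Q $ j2 $ j3 *
       (A $ l $ j1 * d $ j2 * B $ m $ j3))"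
    by (simp add: matrix_matrix_mult_def diag_mat_def transpose_def if_distrib
        sum_distrib_left sum_distrib_right algebra_simps cong: if_cong)
  also have "\<dots> = (\<Sum>j1\<in>UNIV. \<Sum>j2\<in>UNIV. \<Sum>j3\<in>UNIV. p $ j1 * Q $ j1 $ j2 * Q $ j2 $ j3 *
       (A $ l $ j1 * d $ j2 * B $ m $ j3))"
    by (rule sum_reverse3)
  finally show ?thesis .
qed

lemma EH_moment_matrix:
  fixes f :: "'j::finite \<Rightarrow> real \<Rightarrow> real" and g :: "'l::finite \<Rightarrow> real \<Rightarrow> real"
    and k :: "real \<Rightarrow> real"
  assumes g: "\<And>l j. integrable lborel (\<lambda>x. g l x * f j x)"
    and k: "\<And>j. integrable lborel (\<lambda>x. k x * f j x)"
  shows "(\<chi> l m. EH p0 Q f (\<lambda>(x1, x2, x3). g l x1 * k x2 * g m x3))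
    = Omat f g ** diag_mat p0 ** Q ** diag_mat (\<chi> j. EH_cond1 f k j) ** Q ** transpose (Omat f g)"
proof -
  have "EH p0 Q f (\<lambda>(x1, x2, x3). g l x1 * k x2 * g m x3)
      = (Omat f g ** diag_mat p0 ** Q ** diag_mat (\<chi> j. EH_cond1 f k j) ** Q ** transpose (Omat f g)) $ l $ m"
    for l m
    unfolding EH_product[where u = "g l" and v = k and w = "g m", OF g k g] matrix_mul_diag_mat_nth
    by (simp add: Omat_def)
  then show ?thesis
    by (simp add: vec_eq_iff)
qed

lemma Mx_factorization:
  fixes f :: "'j::finite \<Rightarrow> real \<Rightarrow> real" and h :: "'l::finite \<Rightarrow> real \<Rightarrow> real"
  assumes K: "K \<in> borel_measurable borel" "bounded (range K)"
    and f: "\<And>j. integrable lborel (f j)"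
    and h: "\<And>l j. integrable lborel (\<lambda>x. h l x * f j x)"
  shows "Mx p0 Q f K L h x = Omat f h ** diag_mat p0 ** Q ** Dx f K L x ** Q ** transpose (Omat f h)"
proof -
  obtain B where B: "\<And>y. \<bar>K y\<bar> \<le> B"
    using K(2) unfolding bounded_iff by auto
  have "\<bar>KL K L x y\<bar> \<le> 2 ^ L * B" for y
    using B[of "2 ^ L * (x - y)"] by (simp add: KL_def abs_mult)
  moreover have "KL K L x \<in> borel_measurable borel"
    using K(1) unfolding KL_def by measurable
  ultimately have KL_integrable: "integrable lborel (\<lambda>y. KL K L x y * f j y)" for j
    by (intro integrable_bounded_mult f) auto
  have "Mx p0 Q f K L h x = (\<chi> l m. EH p0 Q f (\<lambda>(x1, x2, x3). h l x1 * KL K L x x2 * h m x3))"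
    by (simp add: Mx_def)
  also have "\<dots> = Omat f h ** diag_mat p0 ** Q ** diag_mat (\<chi> j. EH_cond1 f (KL K L x) j) ** Q
      ** transpose (Omat f h)"
    by (rule EH_moment_matrix[where f = f and g = h, OF h KL_integrable])
  also have "diag_mat (\<chi> j. EH_cond1 f (KL K L x) j) = Dx f K L x"
    by (simp add: Dx_def KL_apply_def EH_cond1_def)
  finally show ?thesis .
qed

lemma Pmat_factorization:
  fixes f :: "'j::finite \<Rightarrow> real \<Rightarrow> real" and h :: "'l::finite \<Rightarrow> real \<Rightarrow> real"
  assumes f: "\<And>j. integrable lborel (f j)" "\<And>j. integral\<^sup>L lborel (f j) = 1"
    and h: "\<And>l j. integrable lborel (\<lambda>x. h l x * f j x)"
  shows "Pmat p0 Q f h = Omat f h ** diag_mat p0 ** (Q ** Q) ** transpose (Omat f h)"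
proof -
  have one_integrable: "integrable lborel (\<lambda>x. 1 * f j x)" for j
    using f(1) by simp
  have "Pmat p0 Q f h = (\<chi> l m. EH p0 Q f (\<lambda>(x1, x2, x3). h l x1 * 1 * h m x3))"
    by (simp add: Pmat_def)
  also have "\<dots> = Omat f h ** diag_mat p0 ** Q ** diag_mat (\<chi> j. EH_cond1 f (\<lambda>_. 1) j) ** Q
      ** transpose (Omat f h)"
    by (rule EH_moment_matrix[where f = f and g = h, OF h one_integrable])
  also have "(\<chi> j. EH_cond1 f (\<lambda>_. 1) j) = (\<chi> j. 1)"
    using f(2) by (simp add: EH_cond1_def)
  finally show ?thesis
    by (simp add: diag_mat_one matrix_mul_assoc)
qed

lemma
  fixes A :: "'a::semiring_1^'n^'m"
  assumes "invertible A"
  shows matrix_inv_right: "A ** matrix_inv A = mat 1"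
    and matrix_inv_left: "matrix_inv A ** A = mat 1"
proof -
  have "\<exists>A'. A ** A' = mat 1 \<and> A' ** A = mat 1"
    using assms by (simp add: invertible_def)
  then have "A ** matrix_inv A = mat 1 \<and> matrix_inv A ** A = mat 1"
    unfolding matrix_inv_def by (rule someI_ex)
  then show "A ** matrix_inv A = mat 1" "matrix_inv A ** A = mat 1"
    by auto
qed

lemma
  fixes A C D :: "'a::field^'n^'n"
  assumes AC: "invertible (A ** C)"
  shows invertible_mult_right_factor: "invertible C"
    and matrix_inv_mult_similar: "matrix_inv (A ** C) ** (A ** D ** C) = matrix_inv C ** D ** C"
proof -
  have "(matrix_inv (A ** C) ** A) ** C = mat 1"
    using matrix_inv_left[OF AC] by (simp add: matrix_mul_assoc)
  then show C: "invertible C"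
    using invertible_left_inverse by blast
  have "matrix_inv (A ** C) ** A = (matrix_inv (A ** C) ** A) ** (C ** matrix_inv C)"
    using matrix_inv_right[OF C] by simp
  also have "\<dots> = matrix_inv C"
    using matrix_inv_left[OF AC] by (simp add: matrix_mul_assoc)
  finally show "matrix_inv (A ** C) ** (A ** D ** C) = matrix_inv C ** D ** C"
    by (metis matrix_mul_assoc)
qed

theorem lemma11:
  fixes p0 :: "real^'j::finite" and Q :: "real^'j^'j" and f :: "'j \<Rightarrow> real \<Rightarrow> real"
    and K :: "real \<Rightarrow> real" and CK :: real and L :: nat
    and h :: "'l::finite \<Rightarrow> real \<Rightarrow> real"
  assumes hmm: "hmm_params p0 Q f"
    and K_bounded: "bounded (range K)"
    and K_lip: "CK-lipschitz_on UNIV K"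
    and K_supp: "\<forall>y. \<bar>y\<bar> > 1 \<longrightarrow> K y = 0"
    and h_meas: "\<forall>l. h l \<in> borel_measurable borel"
    and M_fin: "\<forall>x l m. EH_integrable p0 Q f (\<lambda>(x1, x2, x3). h l x1 * KL K L x x2 * h m x3)"
    and P_fin: "\<forall>l m. EH_integrable p0 Q f (\<lambda>(x1, x2, x3). h l x1 * h m x3)"
    and O_fin: "\<forall>l j. integrable lborel (\<lambda>x. h l x * f j x)"
  shows "(\<forall>x. Mx p0 Q f K L h x
            = Omat f h ** diag_mat p0 ** Q ** Dx f K L x ** Q ** transpose (Omat f h))
       \<and> Pmat p0 Q f h = Omat f h ** diag_mat p0 ** (Q ** Q) ** transpose (Omat f h)
       \<and> (\<forall>V :: real^'j^'l.
            invertible (transpose V ** Pmat p0 Q f h ** V) \<longrightarrow>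
              invertible (Q ** transpose (Omat f h) ** V)
            \<and> (\<forall>x. matrix_inv (transpose V ** Pmat p0 Q f h ** V)
                       ** (transpose V ** Mx p0 Q f K L h x ** V)
                   = matrix_inv (Q ** transpose (Omat f h) ** V) ** Dx f K L x
                       ** (Q ** transpose (Omat f h) ** V))
            \<and> (\<exists>S :: real^'j^'j. invertible S \<and>
                 (\<forall>x. matrix_inv (transpose V ** Pmat p0 Q f h ** V)
                        ** (transpose V ** Mx p0 Q f K L h x ** V)
                      = matrix_inv S ** diag_mat (\<chi> j. KL_apply K L (f j) x) ** S)))"
proof -
  have f: "\<And>j. integrable lborel (f j)" "\<And>j. integral\<^sup>L lborel (f j) = 1"
    using hmm unfolding hmm_params_def by blast+
  have "K \<in> borel_measurable borel"
    using lipschitz_on_continuous_on[OF K_lip] by (rule borel_measurable_continuous_onI)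
  then have M: "Mx p0 Q f K L h x = Omat f h ** diag_mat p0 ** Q ** Dx f K L x ** Q ** transpose (Omat f h)"
    for x
    using Mx_factorization K_bounded f O_fin by blast
  have P: "Pmat p0 Q f h = Omat f h ** diag_mat p0 ** (Q ** Q) ** transpose (Omat f h)"
    using Pmat_factorization f O_fin by blast
  show ?thesis
  proof (intro conjI allI impI)
    fix V :: "real^'j^'l"
    assume inv: "invertible (transpose V ** Pmat p0 Q f h ** V)"
    define A where "A = transpose V ** Omat f h ** diag_mat p0 ** Q"
    define C where "C = Q ** transpose (Omat f h) ** V"
    have AC: "transpose V ** Pmat p0 Q f h ** V = A ** C"
      and ADC: "transpose V ** Mx p0 Q f K L h x ** V = A ** Dx f K L x ** C" for x
      unfolding P M A_def C_def by (simp_all add: matrix_mul_assoc)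
    show "invertible (Q ** transpose (Omat f h) ** V)"
      using invertible_mult_right_factor inv unfolding AC C_def .
    show B: "matrix_inv (transpose V ** Pmat p0 Q f h ** V) ** (transpose V ** Mx p0 Q f K L h x ** V)
        = matrix_inv (Q ** transpose (Omat f h) ** V) ** Dx f K L x ** (Q ** transpose (Omat f h) ** V)"
      for x
      using matrix_inv_mult_similar inv unfolding AC ADC C_def .
    show "\<exists>S. invertible S \<and> (\<forall>x. matrix_inv (transpose V ** Pmat p0 Q f h ** V)
        ** (transpose V ** Mx p0 Q f K L h x ** V) = matrix_inv S ** diag_mat (\<chi> j. KL_apply K L (f j) x) ** S)"
      using invertible_mult_right_factor inv B unfolding AC C_def Dx_def by blast
  qed (use M P in auto)
qed

end
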